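(* Let $m \geq 2$ be an integer and $n = m^2$. For $k = 0,1,\ldots,m-1$ let $u_k = e^{i 2 k \pi/m}$. For $\mathbf{t} = (t_0,t_1,\ldots,t_{m-2}) \in (\mathbb{C}\setminus\{0\})^{m-1}$ define the point $\mathbf{x}(\mathbf{t}) = (x_0,\ldots,x_{n-1}) \in \mathbb{C}^n$ by \[ x_{km+j} = u_k\, t_0 t_1 \cdots t_j \quad (j = 0,1,\ldots,m-2), \qquad x_{km+m-1} = u_k\, t_0^{-m+1} t_1^{-m+2} \cdots t_{m-3}^{-2} t_{m-2}^{-1}, \] for $k = 0,1,\ldots,m-1$ (so the exponent of $t_j$ in $x_{km+m-1}$ is $-(m-1-j)$). Then every point $\mathbf{x}(\mathbf{t})$, $\mathbf{t} \in (\mathbb{C}\setminus\{0\})^{m-1}$, is a cyclic $n$-root, and the set $\{\mathbf{x}(\mathbf{t}) : \mathbf{t} \in (\mathbb{C}\setminus\{0\})^{m-1}\}$ is an $(m-1)$-dimensional set of cyclic $n$-roots.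
   Context: For a positive integer $n$, the cyclic $n$-roots system in the variables $x_0,\ldots,x_{n-1}$ consists of the $n$ equations \[ \sum_{j=0}^{n-1} \prod_{k=j}^{j+i-1} x_{k \bmod n} = 0 \quad (i = 1,2,\ldots,n-1), \qquad x_0 x_1 \cdots x_{n-1} - 1 = 0. \] (For $i=1$ this is $x_0+\cdots+x_{n-1}=0$, for $i=2$ it is $x_0x_1+x_1x_2+\cdots+x_{n-2}x_{n-1}+x_{n-1}x_0=0$.) A cyclic $n$-root is a point of $\mathbb{C}^n$ satisfying all these equations. *)

theory Defs
  imports "HOL-Analysis.Analysis"
begin

text \<open>The cyclic n-roots system; points of C^n are functions nat => complex,
  only the coordinates 0..n-1 are relevant.\<close>
definition cyclic_root :: "nat \<Rightarrow> (nat \<Rightarrow> complex) \<Rightarrow> bool" where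
  "cyclic_root n x \<longleftrightarrow>
     (\<forall>i\<in>{1..n-1}. (\<Sum>j<n. \<Prod>k\<in>{j..<j+i}. x (k mod n)) = 0) \<and>
     (\<Prod>k<n. x k) - 1 = 0"

definition unit_root :: "nat \<Rightarrow> nat \<Rightarrow> complex" where
  "unit_root m k = exp (\<i> * 2 * of_nat k * of_real pi / of_nat m)"

definition xpt :: "nat \<Rightarrow> (nat \<Rightarrow> complex) \<Rightarrow> nat \<Rightarrow> complex" where
  "xpt m t p =
     (let k = p div m; j = p mod m in
      unit_root m k *
      (if j < m - 1 then (\<Prod>l\<le>j. t l)
       else (\<Prod>l<m-1. t l powi (- int (m - 1 - l)))))"

text \<open>Parameter domain (C\<setminus>{0})^(m-1): t_j nonzero for j < m-1, other entries fixed to 0.\<close>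
definition param_dom :: "nat \<Rightarrow> (nat \<Rightarrow> complex) set" where
  "param_dom m = {t. (\<forall>j<m-1. t j \<noteq> 0) \<and> (\<forall>j\<ge>m-1. t j = 0)}"

end

theory Submission
  imports Defs
begin

text \<open>Put \<open>w = u\<^sub>1\<close>. Every coordinate satisfies \<open>x\<^sub>q = w\<^bsup>q div m\<^esup> x\<^bsub>q mod m\<^esub>\<close>,
  where \<open>w\<close> is a primitive \<open>m\<close>-th root of unity and the first block \<open>x\<^sub>0, \<dots>, x\<^bsub>m-1\<^esub>\<close>
  has product 1. Let \<open>f p\<close> be the product of the \<open>i\<close> cyclically consecutive coordinates
  starting at \<open>p\<close>. If \<open>m\<close> does not divide \<open>i\<close>, replacing \<open>p\<close> by \<open>p + m\<close> multiplies
  \<open>f p\<close> by \<open>w\<^sup>i \<noteq> 1\<close>; if \<open>i = s m\<close> with \<open>0 < s < m\<close>, replacing \<open>p\<close> by \<open>p + 1\<close> multiplies it by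
  \<open>x\<^bsub>p+i\<^esub> / x\<^sub>p = w\<^sup>s \<noteq> 1\<close>. Either way the cyclic sum of \<open>f\<close> is a nontrivial multiple
  of itself, hence 0. The first \<open>m - 1\<close> coordinates are the prefix products
  \<open>t\<^sub>0 \<cdots> t\<^sub>j\<close>, so the parametrisation is injective and its Jacobian has a triangular
  \<open>(m-1) \<times> (m-1)\<close> block with nonzero diagonal.\<close>

lemma sum_lessThan_shift_periodic:
  fixes f :: "nat \<Rightarrow> 'a::cancel_comm_monoid_add"
  assumes periodic: "\<And>p. f (p + n) = f p"
  shows "(\<Sum>p<n. f (p + a)) = (\<Sum>p<n. f p)"
proof (induction a)
  case (Suc a)
  have "f a + (\<Sum>p<n. f (p + Suc a)) = (\<Sum>p<Suc n. f (p + a))"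
    by (subst sum.lessThan_Suc_shift) simp
  also have "\<dots> = (\<Sum>p<n. f (p + a)) + f a"
    using periodic[of a] by (simp add: add.commute)
  finally show ?case
    using Suc.IH by (simp add: add.commute)
qed simp

lemma sum_lessThan_eq_0_if_shift_scales:
  fixes f :: "nat \<Rightarrow> 'a::idom"
  assumes periodic: "\<And>p. f (p + n) = f p"
    and scales: "\<And>p. f (p + a) = c * f p" and "c \<noteq> 1"
  shows "(\<Sum>p<n. f p) = 0"
proof -
  have "(\<Sum>p<n. f p) = (\<Sum>p<n. f (p + a))"
    using sum_lessThan_shift_periodic[of f n a, OF periodic] by simp
  also have "\<dots> = c * (\<Sum>p<n. f p)"
    by (simp add: scales sum_distrib_left)
  finally have "(1 - c) * (\<Sum>p<n. f p) = 0"
    by (simp add: algebra_simps)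
  with \<open>c \<noteq> 1\<close> show ?thesis
    by simp
qed

lemma prod_window_Suc:
  fixes g :: "nat \<Rightarrow> 'a::comm_monoid_mult"
  shows "(\<Prod>k\<in>{Suc p..<Suc p + i}. g k) * g p = (\<Prod>k\<in>{p..<p + i}. g k) * g (p + i)"
proof -
  have "(\<Prod>k\<in>{Suc p..<Suc p + i}. g k) * g p = (\<Prod>k\<in>{p..<Suc (p + i)}. g k)"
    by (cases i) (simp_all add: prod.atLeast_Suc_lessThan mult_ac)
  also have "\<dots> = (\<Prod>k\<in>{p..<p + i}. g k) * g (p + i)"
    by (simp add: prod.atLeastLessThan_Suc)
  finally show ?thesis .
qed

definition twisted_repeat :: "nat \<Rightarrow> 'a::monoid_mult \<Rightarrow> (nat \<Rightarrow> 'a) \<Rightarrow> nat \<Rightarrow> 'a" where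
  "twisted_repeat m w y q = w ^ (q div m) * y (q mod m)"

lemma twisted_repeat_add_mult:
  "0 < m \<Longrightarrow> twisted_repeat m w y (q + m * s) = w ^ s * twisted_repeat m w y q"
  by (simp add: twisted_repeat_def power_add mult_ac)

lemma twisted_repeat_nonzero:
  fixes w :: "'a::idom"
  assumes "0 < m" "w \<noteq> 0" "\<And>b. b < m \<Longrightarrow> y b \<noteq> 0"
  shows "twisted_repeat m w y q \<noteq> 0"
  using assms by (simp add: twisted_repeat_def)

lemma window_sums_twisted_repeat:
  fixes w :: "'a::idom"
  assumes primitive: "\<And>r. w ^ r = 1 \<longleftrightarrow> m dvd r"
    and y_nonzero: "\<And>b. b < m \<Longrightarrow> y b \<noteq> 0"
    and "0 < i" "i < m\<^sup>2"
  shows "(\<Sum>p<m\<^sup>2. \<Prod>k\<in>{p..<p + i}. twisted_repeat m w y k) = 0"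
proof -
  define g where "g = twisted_repeat m w y"
  define f where "f p = (\<Prod>k\<in>{p..<p + i}. g k)" for p
  have "0 < m"
    using \<open>i < m\<^sup>2\<close> by (cases m) auto
  then have "w \<noteq> 0"
    using primitive[of m] by (auto simp: power_0_left)
  have g_shift: "g (k + m * s) = w ^ s * g k" for k s
    unfolding g_def using \<open>0 < m\<close> by (rule twisted_repeat_add_mult)
  have f_shift: "f (p + a) = (\<Prod>k\<in>{p..<p + i}. g (k + a))" for p a
    unfolding f_def using prod.shift_bounds_nat_ivl[of g p a "p + i"] by (simp add: add_ac)
  have f_periodic: "f (p + m\<^sup>2) = f p" for p
    using f_shift[of p "m\<^sup>2"] g_shift[of _ m] primitive[of m]
    by (simp add: f_def power2_eq_square)
  have "(\<Sum>p<m\<^sup>2. f p) = 0"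
  proof (cases "m dvd i")
    case False
    have "f (p + m) = w ^ i * f p" for p
      using f_shift[of p m] g_shift[of _ 1] by (simp add: f_def prod.distrib)
    then show ?thesis
      using sum_lessThan_eq_0_if_shift_scales f_periodic primitive False by blast
  next
    case True
    then obtain s where i: "i = m * s" ..
    with \<open>0 < i\<close> \<open>i < m\<^sup>2\<close> have "0 < s" "s < m"
      by (auto simp: power2_eq_square)
    then have "\<not> m dvd s"
      using nat_dvd_not_less by blast
    have "f (p + 1) = w ^ s * f p" for p
    proof -
      have "f (Suc p) * g p = f p * g (p + i)"
        unfolding f_def by (rule prod_window_Suc)
      also have "\<dots> = (w ^ s * f p) * g p"
        using g_shift[of p s] by (simp add: i)
      finally show ?thesis
        using twisted_repeat_nonzero[OF \<open>0 < m\<close> \<open>w \<noteq> 0\<close> y_nonzero] by (simp add: g_def)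
    qed
    then show ?thesis
      using sum_lessThan_eq_0_if_shift_scales f_periodic primitive \<open>\<not> m dvd s\<close> by blast
  qed
  then show ?thesis
    by (simp add: f_def g_def)
qed

lemma cyclic_root_twisted_repeat:
  fixes w :: complex
  assumes primitive: "\<And>r. w ^ r = 1 \<longleftrightarrow> m dvd r"
    and y_nonzero: "\<And>b. b < m \<Longrightarrow> y b \<noteq> 0"
    and y_prod: "(\<Prod>b<m. y b) = 1"
    and "0 < m"
  shows "cyclic_root (m\<^sup>2) (twisted_repeat m w y)"
proof -
  define x where "x = twisted_repeat m w y"
  have "w ^ m = 1"
    using primitive by simp
  have x_mod: "x (k mod m\<^sup>2) = x k" for k
  proof -
    have "x k = x (k mod m\<^sup>2 + m * (m * (k div m\<^sup>2)))"
      by (metis mod_mult_div_eq mult.assoc power2_eq_square)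
    also have "\<dots> = x (k mod m\<^sup>2)"
      using twisted_repeat_add_mult[OF \<open>0 < m\<close>, of w y "k mod m\<^sup>2" "m * (k div m\<^sup>2)"] \<open>w ^ m = 1\<close>
      by (simp add: x_def power_mult)
    finally show ?thesis ..
  qed
  have "(\<Prod>k<m\<^sup>2. x k) = (\<Prod>a<m. \<Prod>k\<in>{a * m..<a * m + m}. x k)"
    by (simp add: prod.nat_group power2_eq_square)
  also have "\<dots> = (\<Prod>a<m. (w ^ m) ^ a * (\<Prod>b<m. y b))"
  proof (rule prod.cong[OF refl])
    fix a
    have "(\<Prod>k\<in>{a * m..<a * m + m}. x k) = (\<Prod>b<m. x (b + m * a))"
      using prod.shift_bounds_nat_ivl[of x 0 "a * m" m] by (simp add: atLeast0LessThan add_ac mult_ac)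
    also have "\<dots> = (\<Prod>b<m. w ^ a * y b)"
      by (intro prod.cong) (simp_all add: x_def twisted_repeat_add_mult[OF \<open>0 < m\<close>] twisted_repeat_def)
    also have "\<dots> = (w ^ m) ^ a * (\<Prod>b<m. y b)"
      by (simp add: prod.distrib power_mult[symmetric] mult.commute)
    finally show "(\<Prod>k\<in>{a * m..<a * m + m}. x k) = (w ^ m) ^ a * (\<Prod>b<m. y b)" .
  qed
  also have "\<dots> = 1"
    using \<open>w ^ m = 1\<close> y_prod by simp
  finally have "(\<Prod>k<m\<^sup>2. x k) = 1" .
  moreover have "(\<Sum>j<m\<^sup>2. \<Prod>k\<in>{j..<j + i}. x (k mod m\<^sup>2)) = 0" if "i \<in> {1..m\<^sup>2 - 1}" for i
  proof -
    have "0 < i" "i < m\<^sup>2"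
      using that \<open>0 < m\<close> by auto
    then show ?thesis
      unfolding x_mod unfolding x_def by (intro window_sums_twisted_repeat primitive y_nonzero)
  qed
  ultimately show ?thesis
    unfolding cyclic_root_def x_def by simp
qed

lemma unit_root_eq_power: "unit_root m k = unit_root m 1 ^ k"
proof -
  have "unit_root m k = exp (of_nat k * (\<i> * 2 * of_real pi / of_nat m))"
    unfolding unit_root_def by (simp add: mult_ac)
  also have "\<dots> = unit_root m 1 ^ k"
    unfolding exp_of_nat_mult unit_root_def by simp
  finally show ?thesis .
qed

lemma unit_root_power_eq_1_iff:
  assumes "0 < m"
  shows "unit_root m 1 ^ r = 1 \<longleftrightarrow> m dvd r"
proof -
  have "unit_root m 1 ^ r = unit_root m r"
    by (rule unit_root_eq_power[symmetric])
  also have "\<dots> = exp (2 * of_real pi * \<i> * of_nat r / of_nat m)"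
    unfolding unit_root_def by (simp add: mult_ac)
  finally have "unit_root m 1 ^ r = exp (2 * of_real pi * \<i> * of_nat r / of_nat m)" .
  with assms show ?thesis
    using complex_root_unity_eq_1[of m r] by simp
qed

lemma xpt_eq_twisted_repeat: "xpt m t = twisted_repeat m (unit_root m 1) (xpt m t)"
proof
  fix q
  have "unit_root m (q mod m div m) = 1"
    by (simp add: unit_root_def)
  then show "xpt m t q = twisted_repeat m (unit_root m 1) (xpt m t) q"
    by (simp add: xpt_def twisted_repeat_def Let_def unit_root_eq_power[of m "q div m"])
qed

lemma xpt_prefix: "j < m - 1 \<Longrightarrow> xpt m t j = (\<Prod>l\<le>j. t l)"
  by (simp add: xpt_def unit_root_def)

lemma xpt_last:
  "0 < m \<Longrightarrow> xpt m t (m - 1) = (\<Prod>l<m - 1. t l powi (- int (m - 1 - l)))"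
  by (simp add: xpt_def unit_root_def)

lemma xpt_nonzero: "t \<in> param_dom m \<Longrightarrow> xpt m t q \<noteq> 0"
  by (auto simp: xpt_def unit_root_def param_dom_def Let_def)

lemma prod_prefix_prods:
  fixes t :: "nat \<Rightarrow> 'a::comm_monoid_mult"
  shows "(\<Prod>j<M. \<Prod>l\<le>j. t l) = (\<Prod>l<M. t l ^ (M - l))"
proof (induction M)
  case (Suc M)
  have "(\<Prod>l<Suc M. t l ^ (Suc M - l)) = (\<Prod>l<M. t l ^ (M - l) * t l) * t M"
    by (simp add: Suc_diff_le mult.commute)
  also have "\<dots> = (\<Prod>l<M. t l ^ (M - l)) * (\<Prod>l\<le>M. t l)"
    by (simp add: prod.distrib lessThan_Suc_atMost[symmetric] mult.assoc)
  finally show ?case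
    using Suc.IH by simp
qed simp

text \<open>The exponents of \<open>t\<^sub>l\<close> in the first \<open>m - 1\<close> coordinates add up to \<open>m - 1 - l\<close>,
  which the last coordinate of the block cancels.\<close>
lemma prod_xpt_lessThan:
  assumes "0 < m" "t \<in> param_dom m"
  shows "(\<Prod>b<m. xpt m t b) = 1"
proof -
  have m: "m = Suc (m - 1)"
    using assms by simp
  have "(\<Prod>b<m. xpt m t b) = (\<Prod>b<m - 1. xpt m t b) * xpt m t (m - 1)"
    by (subst m) (simp only: prod.lessThan_Suc)
  also have "(\<Prod>b<m - 1. xpt m t b) = (\<Prod>l<m - 1. t l ^ (m - 1 - l))"
    by (simp add: xpt_prefix prod_prefix_prods)
  also have "xpt m t (m - 1) = (\<Prod>l<m - 1. t l powi (- int (m - 1 - l)))"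
    using assms(1) by (rule xpt_last)
  also have "(\<Prod>l<m - 1. t l ^ (m - 1 - l)) * \<dots>
      = (\<Prod>l<m - 1. t l ^ (m - 1 - l) * t l powi (- int (m - 1 - l)))"
    by (simp add: prod.distrib)
  also have "\<dots> = 1"
  proof (intro prod.neutral ballI)
    fix l
    assume "l \<in> {..<m - 1}"
    with assms(2) have "t l \<noteq> 0"
      by (simp add: param_dom_def)
    then show "t l ^ (m - 1 - l) * t l powi (- int (m - 1 - l)) = 1"
      by (simp add: power_int_minus power_int_of_nat)
  qed
  finally show ?thesis .
qed

lemma cyclic_root_xpt:
  assumes "0 < m" "t \<in> param_dom m"
  shows "cyclic_root (m\<^sup>2) (xpt m t)"
proof -
  have "cyclic_root (m\<^sup>2) (twisted_repeat m (unit_root m 1) (xpt m t))"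
    using assms
    by (intro cyclic_root_twisted_repeat unit_root_power_eq_1_iff xpt_nonzero prod_xpt_lessThan)
  then show ?thesis
    by (simp only: xpt_eq_twisted_repeat[symmetric])
qed

lemma prefix_prods_eq_imp_eq:
  fixes t t' :: "nat \<Rightarrow> 'a::field"
  assumes prods_eq: "\<And>j. j < M \<Longrightarrow> (\<Prod>l\<le>j. t l) = (\<Prod>l\<le>j. t' l)"
    and nonzero: "\<And>j. j < M \<Longrightarrow> t j \<noteq> 0"
  shows "j < M \<Longrightarrow> t j = t' j"
proof (induction j)
  case 0
  then show ?case
    using prods_eq[of 0] by simp
next
  case (Suc j)
  have "(\<Prod>l\<le>j. t l) * t (Suc j) = (\<Prod>l\<le>j. t' l) * t' (Suc j)"
    using prods_eq[OF Suc.prems] by simp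
  moreover have "(\<Prod>l\<le>j. t l) = (\<Prod>l\<le>j. t' l)"
    using prods_eq Suc.prems by simp
  moreover have "(\<Prod>l\<le>j. t l) \<noteq> 0"
    using nonzero Suc.prems by simp
  ultimately show ?case
    by simp
qed

lemma inj_on_xpt: "inj_on (\<lambda>t. \<lambda>p\<in>{..<m\<^sup>2}. xpt m t p) (param_dom m)"
proof (rule inj_onI)
  fix t t'
  assume t: "t \<in> param_dom m" and t': "t' \<in> param_dom m"
    and eq: "(\<lambda>p\<in>{..<m\<^sup>2}. xpt m t p) = (\<lambda>p\<in>{..<m\<^sup>2}. xpt m t' p)"
  have "(\<Prod>l\<le>j. t l) = (\<Prod>l\<le>j. t' l)" if "j < m - 1" for j
  proof -
    have "j < m\<^sup>2"
      using that by (simp add: power2_eq_square less_le_trans[OF _ le_square])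
    then have "xpt m t j = xpt m t' j"
      using fun_cong[OF eq, of j] by simp
    with that show ?thesis
      by (simp add: xpt_prefix)
  qed
  then have "t j = t' j" if "j < m - 1" for j
    using prefix_prods_eq_imp_eq[of "m - 1" t t' j] t that by (simp add: param_dom_def)
  moreover have "t j = t' j" if "\<not> j < m - 1" for j
    using t t' that by (simp add: param_dom_def)
  ultimately show "t = t'"
    by blast
qed

lemma holomorphic_on_fun_upd_apply: "(\<lambda>s. (t(j := s)) l) holomorphic_on A"
  by (cases "l = j") (simp_all add: holomorphic_on_id holomorphic_on_const)

lemma xpt_field_differentiable:
  assumes "t \<in> param_dom m" "j < m - 1"
  shows "(\<lambda>s. xpt m (t(j := s)) p) field_differentiable at (t j)"
proof -
  have nonzero: "\<forall>s\<in>- {0}. (t(j := s)) l \<noteq> 0" if "l < m - 1" for l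
    using assms that by (simp add: param_dom_def)
  have "(\<lambda>s. xpt m (t(j := s)) p) holomorphic_on - {0}"
  proof (cases "p mod m < m - 1")
    case True
    then show ?thesis
      unfolding xpt_def Let_def by (simp only: if_True) (intro holomorphic_intros holomorphic_on_fun_upd_apply)
  next
    case False
    then show ?thesis
      unfolding xpt_def Let_def
      by (simp only: if_False) (intro holomorphic_intros holomorphic_on_fun_upd_apply disjI2 nonzero, simp)
  qed
  moreover have "t j \<in> - {0}"
    using assms by (simp add: param_dom_def)
  ultimately show ?thesis
    using holomorphic_on_imp_differentiable_at open_Compl[OF closed_singleton] by blast
qed

lemma has_field_derivative_xpt_prefix:
  assumes "p < m - 1"
  shows "((\<lambda>s. xpt m (t(j := s)) p) has_field_derivative
           (if j \<le> p then (\<Prod>l\<in>{..p} - {j}. t l) else 0)) (at (t j))"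
proof (cases "j \<le> p")
  case True
  have "(\<lambda>s. xpt m (t(j := s)) p) = (\<lambda>s. s * (\<Prod>l\<in>{..p} - {j}. t l))"
  proof
    fix s
    have "xpt m (t(j := s)) p = (t(j := s)) j * (\<Prod>l\<in>{..p} - {j}. (t(j := s)) l)"
      using assms True by (simp add: xpt_prefix prod.remove)
    also have "(\<Prod>l\<in>{..p} - {j}. (t(j := s)) l) = (\<Prod>l\<in>{..p} - {j}. t l)"
      by (intro prod.cong) auto
    finally show "xpt m (t(j := s)) p = s * (\<Prod>l\<in>{..p} - {j}. t l)"
      by (simp only: fun_upd_same)
  qed
  with True show ?thesis
    by (auto intro!: derivative_eq_intros)
next
  case False
  then have "(\<lambda>s. xpt m (t(j := s)) p) = (\<lambda>s. \<Prod>l\<le>p. t l)"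
    using assms by (simp add: xpt_prefix)
  with False show ?thesis
    by (auto intro!: derivative_eq_intros)
qed

lemma partial_sums_eq_0_imp_eq_0:
  fixes a :: "nat \<Rightarrow> 'a::ab_group_add"
  assumes "\<And>p. p < M \<Longrightarrow> (\<Sum>j\<le>p. a j) = 0" and "j < M"
  shows "a j = 0"
proof (cases j)
  case 0
  with assms show ?thesis
    by force
next
  case (Suc i)
  then show ?thesis
    using assms(1)[of "Suc i"] assms(1)[of i] assms(2) by simp
qed

lemma xpt_partial_derivatives_independent:
  fixes c :: "nat \<Rightarrow> complex"
  assumes t: "t \<in> param_dom m"
    and dependence: "\<And>p. p < m - 1 \<Longrightarrow> (\<Sum>j<m - 1. c j * deriv (\<lambda>s. xpt m (t(j := s)) p) (t j)) = 0"
    and "j < m - 1"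
  shows "c j = 0"
proof -
  have "(\<Sum>j\<le>p. c j / t j) = 0" if p: "p < m - 1" for p
  proof -
    define P where "P = (\<Prod>l\<le>p. t l)"
    have "P \<noteq> 0"
      using t p by (simp add: P_def param_dom_def)
    have summand: "c j * deriv (\<lambda>s. xpt m (t(j := s)) p) (t j) = (if j \<le> p then P * (c j / t j) else 0)"
      if "j < m - 1" for j
    proof -
      have "t j \<noteq> 0"
        using t that by (simp add: param_dom_def)
      moreover have "j \<le> p \<Longrightarrow> P = t j * (\<Prod>l\<in>{..p} - {j}. t l)"
        unfolding P_def by (simp add: prod.remove)
      ultimately show ?thesis
        using DERIV_imp_deriv[OF has_field_derivative_xpt_prefix[OF p, of t j]] by simp
    qed
    have "0 = (\<Sum>j<m - 1. if j \<le> p then P * (c j / t j) else 0)"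
      using dependence[OF p] summand by simp
    also have "\<dots> = (\<Sum>j\<le>p. P * (c j / t j))"
      using p by (intro sum.mono_neutral_cong_right) auto
    also have "\<dots> = P * (\<Sum>j\<le>p. c j / t j)"
      by (simp add: sum_distrib_left)
    finally show ?thesis
      using \<open>P \<noteq> 0\<close> by simp
  qed
  then have "c j / t j = 0"
    using partial_sums_eq_0_imp_eq_0 \<open>j < m - 1\<close> by blast
  with t \<open>j < m - 1\<close> show ?thesis
    by (simp add: param_dom_def)
qed

theorem proposition2:
  fixes m n :: nat
  assumes "m \<ge> 2" and "n = m ^ 2"
  shows "(\<forall>t\<in>param_dom m. cyclic_root n (xpt m t))
    \<and> inj_on (\<lambda>t. \<lambda>p\<in>{..<n}. xpt m t p) (param_dom m)
    \<and> (\<forall>t\<in>param_dom m. \<exists>D :: nat \<Rightarrow> nat \<Rightarrow> complex.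
          (\<forall>p<n. \<forall>j<m-1. ((\<lambda>s. xpt m (t(j := s)) p) has_field_derivative D p j) (at (t j)))
          \<and> (\<forall>c :: nat \<Rightarrow> complex. (\<forall>p<n. (\<Sum>j<m-1. c j * D p j) = 0) \<longrightarrow> (\<forall>j<m-1. c j = 0)))"
proof (intro conjI ballI)
  show "cyclic_root n (xpt m t)" if "t \<in> param_dom m" for t
    using cyclic_root_xpt[OF _ that] assms by simp
  show "inj_on (\<lambda>t. \<lambda>p\<in>{..<n}. xpt m t p) (param_dom m)"
    using inj_on_xpt assms(2) by simp
  fix t
  assume t: "t \<in> param_dom m"
  define D where "D p j = deriv (\<lambda>s. xpt m (t(j := s)) p) (t j)" for p j
  have "m - 1 < n"
    using assms by (simp add: power2_eq_square less_le_trans[OF _ le_square])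
  have "((\<lambda>s. xpt m (t(j := s)) p) has_field_derivative D p j) (at (t j))" if "j < m - 1" for p j
    unfolding D_def using xpt_field_differentiable[OF t that] DERIV_deriv_iff_field_differentiable by blast
  moreover have "c j = 0"
    if "\<forall>p<n. (\<Sum>j<m - 1. c j * D p j) = 0" "j < m - 1" for c j
    using xpt_partial_derivatives_independent[OF t, of c j] that \<open>m - 1 < n\<close> by (simp add: D_def)
  ultimately show "\<exists>D :: nat \<Rightarrow> nat \<Rightarrow> complex.
      (\<forall>p<n. \<forall>j<m-1. ((\<lambda>s. xpt m (t(j := s)) p) has_field_derivative D p j) (at (t j)))
      \<and> (\<forall>c :: nat \<Rightarrow> complex. (\<forall>p<n. (\<Sum>j<m-1. c j * D p j) = 0) \<longrightarrow> (\<forall>j<m-1. c j = 0))"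
    by blast
qed

end
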